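(* Let $n\ge1$, $d\in(0,2]$, and for $\eta\in[0,\pi/2]$ let $T_\eta=\{(\cos\eta\,\mathbf{v}_1;\sin\eta\,\mathbf{v}_2):\mathbf{v}_1,\mathbf{v}_2\in S^{n-1}\}\subset\mathbb{R}^{2n}$. Put $\Delta\eta=2\arcsin(d/2)$ and $t(d)=\left\lfloor\frac{\pi}{4\arcsin(d/2)}\right\rfloor$. Then: (1) the minimum angular interval $|\eta-\eta'|$ between $\eta,\eta'\in[0,\pi/2]$ for which the leaves $T_\eta,T_{\eta'}$ are at minimum distance at least $d$ is $\Delta\eta=2\arcsin(d/2)$; (2) the maximum number of disjoint intervals of length $\Delta\eta$ fitting in $[0,\pi/2]$ is $t(d)$; (3) the leaves $T_\eta$ are pairwise at minimum distance at least $d$ if the parameters are chosen as either (a) $\eta=\eta_0+k\Delta\eta$ for $k\in\{0,1,\dots,t(d)\}$, where $0\le\eta_0\le(\pi/2-t(d)\Delta\eta)/2$, or (b) $\eta=\pi/4+k\Delta\eta$ for $k\in\{0,1,\dots,\lfloor t(d)/2\rfloor\}$.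
   Context: $S^{n-1}$ is the unit sphere of $\mathbb{R}^n$; the minimum distance between two sets $A,B\subset\mathbb{R}^{2n}$ is $\inf\{\|a-b\|:a\in A,b\in B\}$. *)

theory Defs
  imports "HOL-Analysis.Analysis"
begin

text \<open>The leaf T_eta in R^(2n), where R^(2n) is rendered as real^('n + 'n):
  the Inl-coordinates carry cos eta * v1, the Inr-coordinates carry sin eta * v2,
  with v1, v2 on the unit sphere S^(n-1) of real^'n.\<close>
definition leaf :: "real \<Rightarrow> (real^('n::finite + 'n)) set" where
  "leaf \<eta> = {(\<chi> i. case i of Inl j \<Rightarrow> cos \<eta> * (v1 $ j) | Inr j \<Rightarrow> sin \<eta> * (v2 $ j)) | v1 v2.
                 v1 \<in> sphere (0::real^'n) 1 \<and> v2 \<in> sphere (0::real^'n) 1}"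

end

theory Submission
  imports Defs
begin

text \<open>A point of the leaf of \<eta> is the concatenation of cos \<eta> v1 and sin \<eta> v2, so squared
  distances split into two factors. In each factor the distance between c v and c' v'
  (unit v, v' and c, c' \<ge> 0) is at least |c - c'|, with equality for v = v'. Hence the
  distance between the leaves of \<eta> and \<eta>' is the chord between (cos \<eta>, sin \<eta>) and
  (cos \<eta>', sin \<eta>'), namely 2 sin (|\<eta> - \<eta>'|/2), which is at least d exactly when
  |\<eta> - \<eta>'| \<ge> 2 arcsin (d/2). Packing k disjoint intervals of length \<Delta> into [0, \<pi>/2]
  is possible exactly when k \<Delta> \<le> \<pi>/2, and both progressions in (3) satisfy this bound.\<close>

definition vec_join :: "real^'n::finite \<Rightarrow> real^'n \<Rightarrow> real^('n + 'n)" where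
  "vec_join v w = (\<chi> i. case i of Inl j \<Rightarrow> v $ j | Inr j \<Rightarrow> w $ j)"

lemma leaf_eq_vec_join:
  "leaf \<eta> = {vec_join (cos \<eta> *\<^sub>R v) (sin \<eta> *\<^sub>R w) | v w. v \<in> sphere 0 1 \<and> w \<in> sphere 0 1}"
proof -
  have scaled: "vec_join (c *\<^sub>R v) (s *\<^sub>R w) = (\<chi> i. case i of Inl j \<Rightarrow> c * v $ j | Inr j \<Rightarrow> s * w $ j)"
    for c s :: real and v w :: "real^'n"
    by (simp add: vec_eq_iff vec_join_def split: sum.split)
  show ?thesis by (simp only: leaf_def scaled)
qed

lemma dist_vec_join:
  "(dist (vec_join v w) (vec_join v' w'))\<^sup>2 = (dist v v')\<^sup>2 + (dist w w')\<^sup>2"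
  by (simp add: dist_norm power2_norm_eq_inner inner_vec_def sum.Plus vec_join_def
      flip: UNIV_Plus_UNIV)

lemma dist_scaleR_unit_ge:
  fixes v v' :: "'a::real_normed_vector"
  assumes "norm v = 1" "norm v' = 1" "0 \<le> c" "0 \<le> c'"
  shows "\<bar>c - c'\<bar> \<le> dist (c *\<^sub>R v) (c' *\<^sub>R v')"
  using norm_triangle_ineq3[of "c *\<^sub>R v" "c' *\<^sub>R v'"] assms by (simp add: dist_norm)

lemma dist_scaleR_unit:
  fixes u :: "'a::real_normed_vector"
  shows "norm u = 1 \<Longrightarrow> dist (c *\<^sub>R u) (c' *\<^sub>R u) = \<bar>c - c'\<bar>"
  by (simp add: dist_norm flip: scaleR_diff_left)

lemma setdist_leaf:
  assumes "\<eta> \<in> {0..pi/2}" "\<eta>' \<in> {0..pi/2}"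
  shows "setdist (leaf \<eta> :: (real^('n::finite + 'n)) set) (leaf \<eta>') =
    sqrt ((cos \<eta> - cos \<eta>')\<^sup>2 + (sin \<eta> - sin \<eta>')\<^sup>2)" (is "_ = ?D")
proof (rule antisym)
  define u :: "real^'n" where "u = axis undefined 1"
  have u: "u \<in> sphere 0 1" by (simp add: u_def)
  have nonneg: "0 \<le> cos \<eta>" "0 \<le> cos \<eta>'" "0 \<le> sin \<eta>" "0 \<le> sin \<eta>'"
    using assms by (auto intro!: cos_ge_zero sin_ge_zero)
  let ?x = "vec_join (cos \<eta> *\<^sub>R u) (sin \<eta> *\<^sub>R u)" and ?y = "vec_join (cos \<eta>' *\<^sub>R u) (sin \<eta>' *\<^sub>R u)"
  have "(dist ?x ?y)\<^sup>2 = (cos \<eta> - cos \<eta>')\<^sup>2 + (sin \<eta> - sin \<eta>')\<^sup>2"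
    using u by (simp add: dist_vec_join dist_scaleR_unit power2_abs)
  then have "dist ?x ?y = ?D" by (metis zero_le_dist real_sqrt_unique)
  moreover have "?x \<in> leaf \<eta>" "?y \<in> leaf \<eta>'"
    using u by (auto simp: leaf_eq_vec_join)
  ultimately show "setdist (leaf \<eta> :: (real^('n + 'n)) set) (leaf \<eta>') \<le> ?D"
    by (metis setdist_le_dist)
  show "?D \<le> setdist (leaf \<eta> :: (real^('n + 'n)) set) (leaf \<eta>')"
  proof (rule le_setdistI)
    show "leaf \<eta> \<noteq> ({} :: (real^('n + 'n)) set)" "leaf \<eta>' \<noteq> ({} :: (real^('n + 'n)) set)"
      using u by (auto simp: leaf_eq_vec_join)
  next
    fix x y :: "real^('n + 'n)"
    assume "x \<in> leaf \<eta>" "y \<in> leaf \<eta>'"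
    then obtain v w v' w' where
      x: "x = vec_join (cos \<eta> *\<^sub>R v) (sin \<eta> *\<^sub>R w)" and
      y: "y = vec_join (cos \<eta>' *\<^sub>R v') (sin \<eta>' *\<^sub>R w')" and
      unit: "norm v = 1" "norm w = 1" "norm v' = 1" "norm w' = 1"
      by (auto simp: leaf_eq_vec_join)
    have cos_bound: "\<bar>cos \<eta> - cos \<eta>'\<bar> \<le> dist (cos \<eta> *\<^sub>R v) (cos \<eta>' *\<^sub>R v')"
      and sin_bound: "\<bar>sin \<eta> - sin \<eta>'\<bar> \<le> dist (sin \<eta> *\<^sub>R w) (sin \<eta>' *\<^sub>R w')"
      using unit nonneg by (simp_all add: dist_scaleR_unit_ge)
    have "?D\<^sup>2 \<le> (dist x y)\<^sup>2"
      unfolding x y dist_vec_join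
      using power_mono[OF cos_bound, of 2] power_mono[OF sin_bound, of 2] by (simp add: power2_abs)
    then show "?D \<le> dist x y" by (rule power2_le_imp_le) simp
  qed
qed

lemma cos_sin_chord:
  fixes a b :: real
  shows "(cos a - cos b)\<^sup>2 + (sin a - sin b)\<^sup>2 = (2 * sin (\<bar>a - b\<bar> / 2))\<^sup>2"
proof -
  have "(cos a - cos b)\<^sup>2 + (sin a - sin b)\<^sup>2 = 2 - 2 * cos \<bar>a - b\<bar>"
    using sin_cos_squared_add3[of a] sin_cos_squared_add3[of b]
    by (simp add: abs_if cos_diff power2_eq_square algebra_simps)
  also have "\<dots> = (2 * sin (\<bar>a - b\<bar> / 2))\<^sup>2"
    using cos_double_sin[of "\<bar>a - b\<bar> / 2"] by simp
  finally show ?thesis .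
qed

lemma setdist_leaf_eq_chord:
  assumes "\<eta> \<in> {0..pi/2}" "\<eta>' \<in> {0..pi/2}"
  shows "setdist (leaf \<eta> :: (real^('n::finite + 'n)) set) (leaf \<eta>') = 2 * sin (\<bar>\<eta> - \<eta>'\<bar> / 2)"
proof -
  have "0 \<le> sin (\<bar>\<eta> - \<eta>'\<bar> / 2)" by (rule sin_ge_zero) (use assms in auto)
  then show ?thesis unfolding setdist_leaf[OF assms] cos_sin_chord real_sqrt_abs by simp
qed

lemma le_chord_iff:
  fixes d \<delta> :: real
  assumes "0 \<le> d" "d \<le> 2" "0 \<le> \<delta>" "\<delta> \<le> pi"
  shows "d \<le> 2 * sin (\<delta> / 2) \<longleftrightarrow> 2 * arcsin (d / 2) \<le> \<delta>"
proof
  assume "d \<le> 2 * sin (\<delta> / 2)"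
  then have "arcsin (d / 2) \<le> arcsin (sin (\<delta> / 2))"
    using assms by (intro arcsin_le_arcsin) auto
  also have "\<dots> = \<delta> / 2" using assms by (intro arcsin_sin) auto
  finally show "2 * arcsin (d / 2) \<le> \<delta>" by simp
next
  assume "2 * arcsin (d / 2) \<le> \<delta>"
  then have "sin (arcsin (d / 2)) \<le> sin (\<delta> / 2)"
    using assms arcsin_lbound[of "d / 2"] by (intro sin_monotone_2pi_le) auto
  then show "d \<le> 2 * sin (\<delta> / 2)" using assms by simp
qed

lemma le_setdist_leaf_iff:
  assumes "0 \<le> d" "d \<le> 2" "\<eta> \<in> {0..pi/2}" "\<eta>' \<in> {0..pi/2}"
  shows "d \<le> setdist (leaf \<eta> :: (real^('n::finite + 'n)) set) (leaf \<eta>') \<longleftrightarrow>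
    2 * arcsin (d / 2) \<le> \<bar>\<eta> - \<eta>'\<bar>"
  using assms le_chord_iff[of d "\<bar>\<eta> - \<eta>'\<bar>"] by (simp add: setdist_leaf_eq_chord abs_if)

lemma disjoint_intervals_iff:
  fixes x y D :: real
  assumes "0 < D"
  shows "{x<..<x + D} \<inter> {y<..<y + D} = {} \<longleftrightarrow> D \<le> \<bar>x - y\<bar>"
proof
  assume disj: "{x<..<x + D} \<inter> {y<..<y + D} = {}"
  show "D \<le> \<bar>x - y\<bar>"
  proof (rule ccontr)
    assume "\<not> D \<le> \<bar>x - y\<bar>"
    then have "(max x y + min x y + D) / 2 \<in> {x<..<x + D} \<inter> {y<..<y + D}" by auto
    with disj show False by blast
  qed
qed (cases "x \<le> y"; auto)

lemma card_mult_le_of_separated: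
  fixes A :: "real set"
  assumes "finite A" "A \<subseteq> {lo..hi}" "lo \<le> hi + D"
    and "\<And>x y. x \<in> A \<Longrightarrow> y \<in> A \<Longrightarrow> x \<noteq> y \<Longrightarrow> D \<le> \<bar>x - y\<bar>"
  shows "real (card A) * D \<le> hi - lo + D"
  using assms
proof (induction A arbitrary: hi rule: finite_linorder_max_induct)
  case empty
  then show ?case by simp
next
  case (insert b A)
  have "A \<subseteq> {lo..b - D}"
  proof
    fix y assume "y \<in> A"
    with insert.hyps(2) insert.prems have "y < b" "D \<le> \<bar>y - b\<bar>" "lo \<le> y" by auto
    then show "y \<in> {lo..b - D}" by simp
  qed
  then have "real (card A) * D \<le> b - lo"
    using insert.IH[of "b - D"] insert.prems by auto
  moreover have "b \<le> hi" "b \<notin> A" using insert.prems insert.hyps(2) by auto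
  ultimately show ?case using insert.hyps(1) by (simp add: algebra_simps)
qed

definition interval_packing :: "real \<Rightarrow> real \<Rightarrow> nat \<Rightarrow> bool" where
  "interval_packing L D k \<longleftrightarrow> (\<exists>a :: nat \<Rightarrow> real.
     (\<forall>i<k. 0 \<le> a i \<and> a i + D \<le> L) \<and>
     (\<forall>i<k. \<forall>j<k. i \<noteq> j \<longrightarrow> {a i<..<a i + D} \<inter> {a j<..<a j + D} = {}))"

lemma le_abs_diff_of_nat_mult:
  fixes D :: real
  assumes "0 \<le> D" "j \<noteq> k"
  shows "D \<le> \<bar>real j * D - real k * D\<bar>"
proof -
  have "1 * D \<le> \<bar>real j - real k\<bar> * D"
    using assms by (intro mult_right_mono) auto
  then show ?thesis using assms by (simp add: abs_mult flip: left_diff_distrib)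
qed

lemma interval_packing_iff:
  assumes "0 < D" "0 \<le> L"
  shows "interval_packing L D k \<longleftrightarrow> real k * D \<le> L"
proof
  assume "interval_packing L D k"
  then obtain a where inside: "\<forall>i<k. 0 \<le> a i \<and> a i + D \<le> L"
    and disjoint: "\<forall>i<k. \<forall>j<k. i \<noteq> j \<longrightarrow> {a i<..<a i + D} \<inter> {a j<..<a j + D} = {}"
    unfolding interval_packing_def by blast
  then have separated: "D \<le> \<bar>a i - a j\<bar>" if "i < k" "j < k" "i \<noteq> j" for i j
    using that disjoint disjoint_intervals_iff[OF assms(1)] by simp
  have "inj_on a {..<k}"
  proof (rule inj_onI)
    fix i j assume "i \<in> {..<k}" "j \<in> {..<k}" "a i = a j"
    then show "i = j" using separated[of i j] assms(1) by auto
  qed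
  moreover have "real (card (a ` {..<k})) * D \<le> (L - D) - 0 + D"
    using inside separated assms(2) by (intro card_mult_le_of_separated) auto
  ultimately show "real k * D \<le> L" by (simp add: card_image)
next
  assume "real k * D \<le> L"
  then have "0 \<le> real i * D \<and> real i * D + D \<le> L" if "i < k" for i
    using that assms(1) mult_right_mono[of "real (Suc i)" "real k" D] by (simp add: algebra_simps)
  moreover have "{real i * D<..<real i * D + D} \<inter> {real j * D<..<real j * D + D} = {}"
    if "i \<noteq> j" for i j
    using that assms(1) le_abs_diff_of_nat_mult[of D i j] disjoint_intervals_iff by simp
  ultimately show "interval_packing L D k"
    unfolding interval_packing_def by (intro exI[of _ "\<lambda>i. real i * D"]) blast
qed

lemma of_nat_le_iff_le_nat_floor:
  fixes x :: real
  shows "0 \<le> x \<Longrightarrow> real k \<le> x \<longleftrightarrow> k \<le> nat \<lfloor>x\<rfloor>"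
  by (simp add: le_nat_iff le_floor_iff)

lemma le_setdist_leaf_progression:
  fixes d \<eta>0 :: real
  defines "\<Delta> \<equiv> 2 * arcsin (d / 2)"
  assumes "0 \<le> d" "d \<le> 2" "0 \<le> \<eta>0" "\<eta>0 + real m * \<Delta> \<le> pi/2" "j \<le> m" "k \<le> m" "j \<noteq> k"
  shows "d \<le> setdist (leaf (\<eta>0 + real j * \<Delta>) :: (real^('n::finite + 'n)) set) (leaf (\<eta>0 + real k * \<Delta>))"
proof -
  have "0 \<le> \<Delta>" using assms(2,3) by (simp add: \<Delta>_def arcsin_nonneg)
  then have "\<eta>0 + real i * \<Delta> \<in> {0..pi/2}" if "i \<le> m" for i
    using that assms(4,5) mult_right_mono[of "real i" "real m" \<Delta>] by auto
  then show ?thesis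
    using assms(2,3,6-) \<open>0 \<le> \<Delta>\<close>
    by (simp add: le_setdist_leaf_iff le_abs_diff_of_nat_mult flip: \<Delta>_def)
qed

theorem corollary1:
  fixes d :: real
  assumes "0 < d" and "d \<le> 2"
  defines "\<Delta> \<equiv> 2 * arcsin (d / 2)"
    and "t \<equiv> nat \<lfloor>pi / (4 * arcsin (d / 2))\<rfloor>"
  shows
    "(\<forall>\<eta> \<eta>'. \<eta> \<in> {0..pi/2} \<longrightarrow> \<eta>' \<in> {0..pi/2} \<longrightarrow>
        (d \<le> setdist (leaf \<eta> :: (real^('n::finite + 'n)) set) (leaf \<eta>') \<longleftrightarrow> \<Delta> \<le> \<bar>\<eta> - \<eta>'\<bar>))
   \<and> (let S = {k::nat. \<exists>a :: nat \<Rightarrow> real.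
                  (\<forall>i<k. 0 \<le> a i \<and> a i + \<Delta> \<le> pi/2) \<and>
                  (\<forall>i<k. \<forall>j<k. i \<noteq> j \<longrightarrow> {a i<..<a i + \<Delta>} \<inter> {a j<..<a j + \<Delta>} = {})}
      in t \<in> S \<and> (\<forall>k\<in>S. k \<le> t))
   \<and> (\<forall>\<eta>0. 0 \<le> \<eta>0 \<and> \<eta>0 \<le> (pi/2 - real t * \<Delta>) / 2 \<longrightarrow>
        (\<forall>j\<le>t. \<forall>k\<le>t. j \<noteq> k \<longrightarrow>
           d \<le> setdist (leaf (\<eta>0 + real j * \<Delta>) :: (real^('n + 'n)) set) (leaf (\<eta>0 + real k * \<Delta>))))
   \<and> (\<forall>j\<le>t div 2. \<forall>k\<le>t div 2. j \<noteq> k \<longrightarrow>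
           d \<le> setdist (leaf (pi/4 + real j * \<Delta>) :: (real^('n + 'n)) set) (leaf (pi/4 + real k * \<Delta>)))"
proof -
  have "0 < arcsin (d / 2)" using assms(1,2) arcsin_less_arcsin[of 0 "d / 2"] by simp
  then have "0 < \<Delta>" by (simp add: \<Delta>_def)
  have t_iff: "real k * \<Delta> \<le> pi/2 \<longleftrightarrow> k \<le> t" for k
    using \<open>0 < \<Delta>\<close> of_nat_le_iff_le_nat_floor[of "pi / (2 * \<Delta>)" k]
    by (simp add: t_def \<Delta>_def pos_le_divide_eq mult.assoc)
  have "real (t div 2) * \<Delta> \<le> real t / 2 * \<Delta>"
    using \<open>0 < \<Delta>\<close> of_nat_div_le_of_nat[of t 2] by (intro mult_right_mono) auto
  then have t_half: "pi/4 + real (t div 2) * \<Delta> \<le> pi/2"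
    using t_iff[of t] by simp
  have leaves: "\<forall>\<eta> \<eta>'. \<eta> \<in> {0..pi/2} \<longrightarrow> \<eta>' \<in> {0..pi/2} \<longrightarrow>
      (d \<le> setdist (leaf \<eta> :: (real^('n::finite + 'n)) set) (leaf \<eta>') \<longleftrightarrow> \<Delta> \<le> \<bar>\<eta> - \<eta>'\<bar>)"
    using assms(1,2) by (simp add: le_setdist_leaf_iff \<Delta>_def)
  have packings: "{k. interval_packing (pi/2) \<Delta> k} = {k. k \<le> t}"
    unfolding interval_packing_iff[OF \<open>0 < \<Delta>\<close> pi_half_ge_zero] t_iff ..
  have from_\<eta>0: "d \<le> setdist (leaf (\<eta>0 + real j * \<Delta>) :: (real^('n + 'n)) set) (leaf (\<eta>0 + real k * \<Delta>))"
    if "0 \<le> \<eta>0 \<and> \<eta>0 \<le> (pi/2 - real t * \<Delta>) / 2" "j \<le> t" "k \<le> t" "j \<noteq> k" for \<eta>0 j k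
    using that assms(1,2) t_iff[of t] unfolding \<Delta>_def
    by (intro le_setdist_leaf_progression[of d _ t]) simp_all
  have from_pi4: "d \<le> setdist (leaf (pi/4 + real j * \<Delta>) :: (real^('n + 'n)) set) (leaf (pi/4 + real k * \<Delta>))"
    if "j \<le> t div 2" "k \<le> t div 2" "j \<noteq> k" for j k
    using that assms(1,2) t_half unfolding \<Delta>_def
    by (intro le_setdist_leaf_progression[of d _ "t div 2"]) simp_all
  show ?thesis
    unfolding Let_def interval_packing_def[symmetric] packings
    using leaves from_\<eta>0 from_pi4 by blast
qed

end
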